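(* Let $\mathcal E$ be a nest on a complex Banach space $X$, let $\mathcal J$ be a $\mathcal T(\mathcal E)$-bimodule and let $\mathcal J_0$ be the set of finite rank operators in $\mathcal J$. Then $\mathcal J\subseteq\overline{\mathcal J_0}^{\mathrm{SOT}}\subseteq\overline{\mathcal J_0}^{\mathrm{WOT}}$, where the closures are in the strong and weak operator topologies respectively.
   Context: A nest $\mathcal E$ on $X$ is a family of closed linear subspaces of $X$, totally ordered by inclusion, containing $\{0\}$ and $X$, closed under arbitrary meets (intersections) and joins (norm-closed linear spans of unions). $\mathcal T(\mathcal E)=\{T\in\mathcal B(X): TE\subseteq E\ \forall E\in\mathcal E\}$. A $\mathcal T(\mathcal E)$-bimodule is a linear subspace $\mathcal J\subseteq\mathcal B(X)$ with $\mathcal T(\mathcal E)\mathcal J\subseteq\mathcal J$ and $\mathcal J\mathcal T(\mathcal E)\subseteq\mathcal J$. *)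

theory Defs
  imports "HOL-Analysis.Analysis"
begin

text \<open>A complex Banach space is modelled as a real Banach space (type class banach)
  together with a complex structure CJ (multiplication by the imaginary unit):
  CJ is real-linear, CJ (CJ x) = - x, and multiplication by unimodular scalars
  is isometric, so that the norm is a complex norm.\<close>

definition complex_structure :: "('a::real_normed_vector \<Rightarrow> 'a) \<Rightarrow> bool" where
  "complex_structure CJ \<longleftrightarrow> linear CJ \<and> (\<forall>x. CJ (CJ x) = - x) \<and>
     (\<forall>t x. norm (cos t *\<^sub>R x + sin t *\<^sub>R CJ x) = norm x)"

definition cscale :: "('a::real_vector \<Rightarrow> 'a) \<Rightarrow> complex \<Rightarrow> 'a \<Rightarrow> 'a" where
  "cscale CJ c x = Re c *\<^sub>R x + Im c *\<^sub>R CJ x"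

definition bops :: "('a::real_normed_vector \<Rightarrow> 'a) \<Rightarrow> ('a \<Rightarrow> 'a) set" where
  "bops CJ = {T. bounded_linear T \<and> (\<forall>x. T (CJ x) = CJ (T x))}"

definition cdual :: "('a::real_normed_vector \<Rightarrow> 'a) \<Rightarrow> ('a \<Rightarrow> complex) set" where
  "cdual CJ = {f. bounded_linear f \<and> (\<forall>x. f (CJ x) = \<i> * f x)}"

definition closed_csubspace :: "('a::real_normed_vector \<Rightarrow> 'a) \<Rightarrow> 'a set \<Rightarrow> bool" where
  "closed_csubspace CJ E \<longleftrightarrow> subspace E \<and> CJ ` E \<subseteq> E \<and> closed E"

definition nest :: "('a::real_normed_vector \<Rightarrow> 'a) \<Rightarrow> 'a set set \<Rightarrow> bool" where
  "nest CJ N \<longleftrightarrow>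
     (\<forall>E\<in>N. closed_csubspace CJ E) \<and>
     (\<forall>E\<in>N. \<forall>F\<in>N. E \<subseteq> F \<or> F \<subseteq> E) \<and>
     {0} \<in> N \<and> UNIV \<in> N \<and>
     (\<forall>S\<subseteq>N. \<Inter>S \<in> N) \<and>
     (\<forall>S\<subseteq>N. closure (span (\<Union>S)) \<in> N)"

definition nest_alg :: "('a::real_normed_vector \<Rightarrow> 'a) \<Rightarrow> 'a set set \<Rightarrow> ('a \<Rightarrow> 'a) set" where
  "nest_alg CJ N = {T \<in> bops CJ. \<forall>E\<in>N. T ` E \<subseteq> E}"

definition op_csubspace :: "('a::real_normed_vector \<Rightarrow> 'a) \<Rightarrow> ('a \<Rightarrow> 'a) set \<Rightarrow> bool" where
  "op_csubspace CJ M \<longleftrightarrow> M \<subseteq> bops CJ \<and> (\<lambda>x. 0) \<in> M \<and>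
     (\<forall>S\<in>M. \<forall>T\<in>M. (\<lambda>x. S x + T x) \<in> M) \<and>
     (\<forall>c. \<forall>T\<in>M. (\<lambda>x. cscale CJ c (T x)) \<in> M)"

definition bimodule :: "('a::real_normed_vector \<Rightarrow> 'a) \<Rightarrow> 'a set set \<Rightarrow> ('a \<Rightarrow> 'a) set \<Rightarrow> bool" where
  "bimodule CJ N M \<longleftrightarrow> op_csubspace CJ M \<and>
     (\<forall>A\<in>nest_alg CJ N. \<forall>T\<in>M. A \<circ> T \<in> M \<and> T \<circ> A \<in> M)"

definition finite_rank :: "('a::real_vector \<Rightarrow> 'a) \<Rightarrow> bool" where
  "finite_rank T \<longleftrightarrow> (\<exists>F. finite F \<and> range T \<subseteq> span F)"

text \<open>Closure in B(X) w.r.t. the strong operator topology, via its basic neighbourhoods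
  {S. \<forall>x\<in>F. norm (S x - T x) < e}, F finite, e > 0.\<close>
definition sot_closure :: "('a::real_normed_vector \<Rightarrow> 'a) \<Rightarrow> ('a \<Rightarrow> 'a) set \<Rightarrow> ('a \<Rightarrow> 'a) set" where
  "sot_closure CJ M = {T \<in> bops CJ. \<forall>F e. finite F \<and> e > 0 \<longrightarrow>
      (\<exists>S\<in>M. \<forall>x\<in>F. norm (S x - T x) < e)}"

text \<open>Closure in B(X) w.r.t. the weak operator topology, via its basic neighbourhoods
  {S. \<forall>(x,f)\<in>F. cmod (f (S x - T x)) < e}, F finite set of pairs in X \<times> X*, e > 0.\<close>
definition wot_closure :: "('a::real_normed_vector \<Rightarrow> 'a) \<Rightarrow> ('a \<Rightarrow> 'a) set \<Rightarrow> ('a \<Rightarrow> 'a) set" where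
  "wot_closure CJ M = {T \<in> bops CJ. \<forall>F e. finite F \<and> F \<subseteq> UNIV \<times> cdual CJ \<and> e > 0 \<longrightarrow>
      (\<exists>S\<in>M. \<forall>(x,f)\<in>F. cmod (f (S x - T x)) < e)}"

end

theory Submission
  imports Defs
begin

text \<open>
  The identity is a strong limit of finite-rank operators of the nest algebra (Erdos' density
  theorem); composing an element T of the bimodule with such operators gives finite-rank elements
  of the bimodule converging strongly to T, and strong convergence implies weak convergence.

  The identity is approximated on a finite-dimensional complex subspace V by induction on its
  dimension.  The part W of V lying in the nest elements that do not contain V is a proper
  subspace, approximable by induction, and every nest element either contains V or meets V inside
  W.  The vectors y of V are then added one at a time, correcting an approximant A' by a rank-one
  operator x \<mapsto> f(x) u, where the functional f is supplied by Hahn--Banach and vanishes on the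
  nest elements that do not contain u.  If y is not in E + W, where E is the closure of the union
  of the nest elements not containing y, then u = y - A' y; otherwise y = g + w with g \<in> E, and u
  is chosen close to g - A' g inside a single nest element not containing y.
\<close>

text \<open>Hahn--Banach for the dominating function C * norm x, with partial functionals represented
  by their graphs so that Zorn's lemma applies to set inclusion.\<close>
definition dominated_graph :: "real \<Rightarrow> ('a::real_normed_vector \<times> real) set \<Rightarrow> bool" where
  "dominated_graph C g \<longleftrightarrow>
     (\<forall>x a b. (x, a) \<in> g \<longrightarrow> (x, b) \<in> g \<longrightarrow> a = b) \<and> (0, 0) \<in> g \<and>
     (\<forall>x a y b. (x, a) \<in> g \<longrightarrow> (y, b) \<in> g \<longrightarrow> (x + y, a + b) \<in> g) \<and>
     (\<forall>x a r. (x, a) \<in> g \<longrightarrow> (r *\<^sub>R x, r * a) \<in> g) \<and>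
     (\<forall>x a. (x, a) \<in> g \<longrightarrow> a \<le> C * norm x)"

lemma dominated_graphD:
  assumes "dominated_graph C g"
  shows "(x, a) \<in> g \<Longrightarrow> (x, b) \<in> g \<Longrightarrow> a = b" and "(0, 0) \<in> g"
    and "(x, a) \<in> g \<Longrightarrow> (y, b) \<in> g \<Longrightarrow> (x + y, a + b) \<in> g"
    and "(x, a) \<in> g \<Longrightarrow> (r *\<^sub>R x, r * a) \<in> g"
    and "(x, a) \<in> g \<Longrightarrow> a \<le> C * norm x"
  using assms unfolding dominated_graph_def by blast+

lemma dominated_graph_Union:
  assumes "\<G> \<noteq> {}" and "\<forall>g\<in>\<G>. \<forall>h\<in>\<G>. g \<subseteq> h \<or> h \<subseteq> g" and "\<forall>g\<in>\<G>. dominated_graph C g"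
  shows "dominated_graph C (\<Union>\<G>)"
proof -
  have common: "\<exists>g\<in>\<G>. p \<in> g \<and> q \<in> g" if "p \<in> \<Union>\<G>" "q \<in> \<Union>\<G>" for p q
    using that assms(2) by blast
  have G: "dominated_graph C g" if "g \<in> \<G>" for g
    using assms(3) that by blast
  show ?thesis
    unfolding dominated_graph_def
  proof (intro conjI allI impI)
    fix x a b assume "(x, a) \<in> \<Union>\<G>" "(x, b) \<in> \<Union>\<G>"
    then obtain g where "g \<in> \<G>" "(x, a) \<in> g" "(x, b) \<in> g" using common by blast
    then show "a = b" using dominated_graphD(1)[OF G] by blast
  next
    obtain g where "g \<in> \<G>" using assms(1) by blast
    then show "(0, 0) \<in> \<Union>\<G>" using dominated_graphD(2)[OF G] by blast
  next
    fix x a y b assume "(x, a) \<in> \<Union>\<G>" "(y, b) \<in> \<Union>\<G>"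
    then obtain g where "g \<in> \<G>" "(x, a) \<in> g" "(y, b) \<in> g" using common by blast
    then show "(x + y, a + b) \<in> \<Union>\<G>" using dominated_graphD(3)[OF G] by blast
  next
    fix x a r assume "(x, a) \<in> \<Union>\<G>"
    then show "(r *\<^sub>R x, r * a) \<in> \<Union>\<G>" using dominated_graphD(4)[OF G] by blast
  next
    fix x a assume "(x, a) \<in> \<Union>\<G>"
    then show "a \<le> C * norm x" using dominated_graphD(5)[OF G] by blast
  qed
qed

text \<open>The one-step extension: a value c for the new direction x0 exists because
  a - C |y - x0| \<le> C |z + x0| - b for all points (y, a), (z, b) of the graph.\<close>
lemma dominated_graph_extension_value:
  assumes g: "dominated_graph C g" and "C \<ge> 0"
  obtains c where "\<And>y a t. (y, a) \<in> g \<Longrightarrow> a + t * c \<le> C * norm (y + t *\<^sub>R x0)"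
proof -
  note gD = dominated_graphD[OF g]
  have split: "a - C * norm (y - x0) \<le> C * norm (z + x0) - b" if "(y, a) \<in> g" "(z, b) \<in> g" for y a z b
  proof -
    have "a + b \<le> C * norm (y + z)" using gD(5)[OF gD(3)[OF that]] .
    also have "\<dots> \<le> C * (norm (y - x0) + norm (z + x0))"
      using norm_triangle_ineq[of "y - x0" "z + x0"] \<open>C \<ge> 0\<close> by (simp add: mult_left_mono)
    finally show ?thesis by (simp add: algebra_simps)
  qed
  define c where "c = Sup {a - C * norm (y - x0) | y a. (y, a) \<in> g}"
  have c_lower: "a - C * norm (y - x0) \<le> c" if "(y, a) \<in> g" for y a
  proof -
    have "bdd_above {a - C * norm (y - x0) | y a. (y, a) \<in> g}"
      using split[OF _ gD(2)] unfolding bdd_above_def by fastforce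
    then show ?thesis unfolding c_def using that by (intro cSup_upper) blast+
  qed
  have c_upper: "b + c \<le> C * norm (z + x0)" if "(z, b) \<in> g" for z b
  proof -
    have "c \<le> C * norm (z + x0) - b"
      unfolding c_def using gD(2) split[OF _ that] by (intro cSup_least) blast+
    then show ?thesis by simp
  qed
  have "a + t * c \<le> C * norm (y + t *\<^sub>R x0)" if "(y, a) \<in> g" for y a t
  proof (cases t "0 :: real" rule: linorder_cases)
    case less
    have "(1 / - t) * a - C * norm ((1 / - t) *\<^sub>R y - x0) \<le> c" using c_lower[OF gD(4)[OF that]] .
    then have "- t * ((1 / - t) * a - c) \<le> - t * (C * norm ((1 / - t) *\<^sub>R y - x0))"
      using less by (intro mult_left_mono) auto
    also have "- t * (C * norm ((1 / - t) *\<^sub>R y - x0)) = C * norm (- t *\<^sub>R ((1 / - t) *\<^sub>R y - x0))"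
      using less by simp
    finally show ?thesis using less by (simp add: algebra_simps)
  next
    case equal
    then show ?thesis using gD(5)[OF that] by simp
  next
    case greater
    have "(1 / t) * a + c \<le> C * norm ((1 / t) *\<^sub>R y + x0)" using c_upper[OF gD(4)[OF that]] .
    then have "t * ((1 / t) * a + c) \<le> t * (C * norm ((1 / t) *\<^sub>R y + x0))"
      using greater by (intro mult_left_mono) auto
    also have "t * (C * norm ((1 / t) *\<^sub>R y + x0)) = C * norm (t *\<^sub>R ((1 / t) *\<^sub>R y + x0))"
      using greater by simp
    finally show ?thesis using greater by (simp add: algebra_simps)
  qed
  then show ?thesis using that by blast
qed

lemma dominated_graph_line_coordinate_unique:
  assumes g: "dominated_graph C g" and "x0 \<notin> fst ` g"
    and "(y, a) \<in> g" "(y', a') \<in> g" "y + t *\<^sub>R x0 = y' + t' *\<^sub>R x0"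
  shows "t = t'"
proof (rule ccontr)
  note gD = dominated_graphD[OF g]
  assume "t \<noteq> t'"
  have "((1 / (t - t')) *\<^sub>R (y' + (-1) *\<^sub>R y), (1 / (t - t')) * (a' + (-1) * a)) \<in> g"
    using gD(4)[OF gD(3)[OF assms(4) gD(4)[OF assms(3)]]] .
  moreover have "y' + (-1) *\<^sub>R y = (t - t') *\<^sub>R x0" using assms(5) by (simp add: algebra_simps)
  ultimately have "(x0, (1 / (t - t')) * (a' + (-1) * a)) \<in> g" using \<open>t \<noteq> t'\<close> by simp
  then show False using \<open>x0 \<notin> fst ` g\<close> by force
qed

lemma dominated_graph_extend:
  fixes g :: "('a::real_normed_vector \<times> real) set"
  assumes g: "dominated_graph C g" and x0: "x0 \<notin> fst ` g" and "C \<ge> 0"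
  shows "\<exists>h. dominated_graph C h \<and> g \<subset> h"
proof -
  note gD = dominated_graphD[OF g]
  obtain c where bound: "\<And>y a t. (y, a) \<in> g \<Longrightarrow> a + t * c \<le> C * norm (y + t *\<^sub>R x0)"
    using dominated_graph_extension_value[OF g \<open>C \<ge> 0\<close>] by blast
  note unique = dominated_graph_line_coordinate_unique[OF g x0]
  define h where "h = {(y + t *\<^sub>R x0, a + t * c) | y a t. (y, a) \<in> g}"
  have h_elim: "\<exists>y a' t. (y, a') \<in> g \<and> x = y + t *\<^sub>R x0 \<and> a = a' + t * c" if "(x, a) \<in> h" for x a
    using that unfolding h_def by blast
  have h_intro: "(y + t *\<^sub>R x0, a + t * c) \<in> h" if "(y, a) \<in> g" for y a t
    using that unfolding h_def by blast
  have "dominated_graph C h"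
    unfolding dominated_graph_def
  proof (intro conjI allI impI)
    fix x a b assume "(x, a) \<in> h" "(x, b) \<in> h"
    then obtain y1 a1 t1 y2 a2 t2 where *: "(y1, a1) \<in> g" "(y2, a2) \<in> g"
      "x = y1 + t1 *\<^sub>R x0" "x = y2 + t2 *\<^sub>R x0" "a = a1 + t1 * c" "b = a2 + t2 * c"
      using h_elim by metis
    then have "t1 = t2" using unique by metis
    with * show "a = b" using gD(1) by auto
  next
    show "(0, 0) \<in> h" using h_intro[OF gD(2), of 0] by simp
  next
    fix x a y b assume "(x, a) \<in> h" "(y, b) \<in> h"
    then obtain y1 a1 t1 y2 a2 t2 where *: "(y1, a1) \<in> g" "(y2, a2) \<in> g"
      "x = y1 + t1 *\<^sub>R x0" "y = y2 + t2 *\<^sub>R x0" "a = a1 + t1 * c" "b = a2 + t2 * c"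
      using h_elim by metis
    show "(x + y, a + b) \<in> h"
      using h_intro[OF gD(3)[OF *(1,2)], of "t1 + t2"] * by (simp add: algebra_simps)
  next
    fix x a r assume "(x, a) \<in> h"
    then obtain y a' t where *: "(y, a') \<in> g" "x = y + t *\<^sub>R x0" "a = a' + t * c"
      using h_elim by metis
    show "(r *\<^sub>R x, r * a) \<in> h"
      using h_intro[OF gD(4)[OF *(1), of r], of "r * t"] * by (simp add: algebra_simps)
  next
    fix x a assume "(x, a) \<in> h"
    then show "a \<le> C * norm x" using h_elim bound by blast
  qed
  moreover have "g \<subseteq> h" using h_intro[of _ _ 0] by auto
  moreover have "(x0, c) \<in> h" using h_intro[OF gD(2), of 1] by simp
  then have "h \<noteq> g" using x0 by force
  ultimately show ?thesis by blast
qed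

lemma dominated_graph_functional:
  assumes g: "dominated_graph C g" and total: "\<And>x. \<exists>a. (x, a) \<in> g"
  obtains \<phi> where "bounded_linear \<phi>" "\<And>x a. (x, a) \<in> g \<Longrightarrow> \<phi> x = a"
proof
  note gD = dominated_graphD[OF g]
  define \<phi> where "\<phi> x = (THE a. (x, a) \<in> g)" for x
  have graph: "(x, \<phi> x) \<in> g" for x
    unfolding \<phi>_def using total[of x] gD(1) by (metis theI)
  show \<phi>_eq: "\<phi> x = a" if "(x, a) \<in> g" for x a
    using gD(1)[OF that graph] by simp
  have scale: "\<phi> (r *\<^sub>R x) = r * \<phi> x" for r x
    using \<phi>_eq[OF gD(4)[OF graph]] .
  show "bounded_linear \<phi>"
  proof (rule bounded_linear_intro)
    show "\<phi> (x + y) = \<phi> x + \<phi> y" for x y using \<phi>_eq[OF gD(3)[OF graph graph]] .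
    show "\<phi> (r *\<^sub>R x) = r *\<^sub>R \<phi> x" for r x using scale by simp
    show "norm (\<phi> x) \<le> norm x * C" for x
      using gD(5)[OF graph, of x] gD(5)[OF graph, of "-x"] scale[of "-1" x] by (simp add: abs_le_iff mult.commute)
  qed
qed

lemma dominated_graph_extends_to_functional:
  assumes g0: "dominated_graph C g0" and "C \<ge> 0"
  obtains \<phi> where "bounded_linear \<phi>" "\<And>x a. (x, a) \<in> g0 \<Longrightarrow> \<phi> x = a"
proof -
  define \<A> where "\<A> = {g. dominated_graph C g \<and> g0 \<subseteq> g}"
  have "\<exists>M\<in>\<A>. \<forall>g\<in>\<A>. M \<subseteq> g \<longrightarrow> g = M"
  proof (rule subset_Zorn_nonempty)
    show "\<A> \<noteq> {}" using g0 by (auto simp: \<A>_def)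
  next
    fix \<G> assume "\<G> \<noteq> {}" and chain: "subset.chain \<A> \<G>"
    have "\<G> \<subseteq> \<A>" and "\<forall>g\<in>\<G>. \<forall>h\<in>\<G>. g \<subseteq> h \<or> h \<subseteq> g"
      using chain unfolding subset_chain_def by blast+
    then have "dominated_graph C (\<Union>\<G>)"
      using dominated_graph_Union[OF \<open>\<G> \<noteq> {}\<close>] unfolding \<A>_def by blast
    then show "\<Union>\<G> \<in> \<A>"
      using \<open>\<G> \<subseteq> \<A>\<close> \<open>\<G> \<noteq> {}\<close> unfolding \<A>_def by blast
  qed
  then obtain M where "M \<in> \<A>" and max: "\<And>g. g \<in> \<A> \<Longrightarrow> M \<subseteq> g \<Longrightarrow> g = M"
    by blast
  then have M: "dominated_graph C M" "g0 \<subseteq> M" unfolding \<A>_def by auto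
  have "\<exists>a. (x, a) \<in> M" for x
  proof (rule ccontr)
    assume "\<nexists>a. (x, a) \<in> M"
    then have "x \<notin> fst ` M" by force
    then obtain g where "dominated_graph C g" "M \<subset> g"
      using dominated_graph_extend[OF M(1) _ \<open>C \<ge> 0\<close>] by blast
    then show False using max[of g] M(2) unfolding \<A>_def by blast
  qed
  then obtain \<phi> where "bounded_linear \<phi>" "\<And>x a. (x, a) \<in> M \<Longrightarrow> \<phi> x = a"
    using dominated_graph_functional[OF M(1)] by blast
  then show ?thesis using that M(2) by blast
qed

lemma infdist_scale_le:
  fixes Z :: "'a::real_normed_vector set"
  assumes "subspace Z" "z \<in> Z"
  shows "\<bar>t\<bar> * infdist x0 Z \<le> norm (z + t *\<^sub>R x0)"
proof (cases "t = 0")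
  case False
  have "- ((1 / t) *\<^sub>R z) \<in> Z" using assms by (simp add: subspace_neg subspace_scale)
  then have "infdist x0 Z \<le> norm (x0 + (1 / t) *\<^sub>R z)"
    using infdist_le[of "- ((1 / t) *\<^sub>R z)" Z x0] by (simp add: dist_norm)
  then have "\<bar>t\<bar> * infdist x0 Z \<le> norm (t *\<^sub>R (x0 + (1 / t) *\<^sub>R z))"
    by (simp add: mult_left_mono)
  also have "t *\<^sub>R (x0 + (1 / t) *\<^sub>R z) = z + t *\<^sub>R x0" using False by (simp add: algebra_simps)
  finally show ?thesis .
qed simp

lemma dominated_graph_quotient_coordinate:
  fixes Z :: "'a::real_normed_vector set"
  assumes Z: "subspace Z" "closed Z" and "x0 \<notin> Z"
  shows "dominated_graph (1 / infdist x0 Z) {(z + t *\<^sub>R x0, t) | z t. z \<in> Z}"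
proof -
  have "0 \<in> Z" using Z(1) by (rule subspace_0)
  have d: "infdist x0 Z > 0"
    using infdist_pos_not_in_closed[OF Z(2) _ \<open>x0 \<notin> Z\<close>] \<open>0 \<in> Z\<close> by blast
  define C where "C = 1 / infdist x0 Z"
  define g where "g = {(z + t *\<^sub>R x0, t) | z t. z \<in> Z}"
  have g_intro: "(z + t *\<^sub>R x0, t) \<in> g" if "z \<in> Z" for z t
    using that unfolding g_def by blast
  have g_elim: "\<exists>z. z \<in> Z \<and> x = z + t *\<^sub>R x0" if "(x, t) \<in> g" for x t
    using that unfolding g_def by blast
  have unique: "t = t'" if "z \<in> Z" "z' \<in> Z" "z + t *\<^sub>R x0 = z' + t' *\<^sub>R x0" for z z' t t'
  proof (rule ccontr)
    assume "t \<noteq> t'"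
    have "z' - z = (t - t') *\<^sub>R x0" using that(3) by (simp add: algebra_simps)
    then have "x0 = (1 / (t - t')) *\<^sub>R (z' - z)" using \<open>t \<noteq> t'\<close> by simp
    moreover have "(1 / (t - t')) *\<^sub>R (z' - z) \<in> Z"
      using Z(1) that by (simp add: subspace_diff subspace_scale)
    ultimately show False using \<open>x0 \<notin> Z\<close> by simp
  qed
  have bound: "t \<le> C * norm (z + t *\<^sub>R x0)" if "z \<in> Z" for z t
  proof -
    have "\<bar>t\<bar> * infdist x0 Z \<le> norm (z + t *\<^sub>R x0)" by (rule infdist_scale_le[OF Z(1) that])
    then have "\<bar>t\<bar> \<le> norm (z + t *\<^sub>R x0) / infdist x0 Z" using d by (simp add: pos_le_divide_eq)
    then show ?thesis by (simp add: C_def)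
  qed
  have "dominated_graph C g"
    unfolding dominated_graph_def
  proof (intro conjI allI impI)
    fix x a b assume "(x, a) \<in> g" "(x, b) \<in> g"
    then show "a = b" using g_elim unique by metis
  next
    show "(0, 0) \<in> g" using g_intro[OF \<open>0 \<in> Z\<close>, of 0] by simp
  next
    fix x a y b assume "(x, a) \<in> g" "(y, b) \<in> g"
    then obtain z z' where *: "z \<in> Z" "z' \<in> Z" "x = z + a *\<^sub>R x0" "y = z' + b *\<^sub>R x0"
      using g_elim by metis
    then show "(x + y, a + b) \<in> g"
      using g_intro[OF subspace_add[OF Z(1) *(1,2)], of "a + b"] by (simp add: algebra_simps)
  next
    fix x a r assume "(x, a) \<in> g"
    then obtain z where *: "z \<in> Z" "x = z + a *\<^sub>R x0" using g_elim by metis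
    then show "(r *\<^sub>R x, r * a) \<in> g"
      using g_intro[OF subspace_scale[OF Z(1) *(1), of r], of "r * a"] by (simp add: algebra_simps)
  next
    fix x a assume "(x, a) \<in> g"
    then show "a \<le> C * norm x" using g_elim bound by blast
  qed
  then show ?thesis unfolding C_def g_def .
qed

lemma separating_functional:
  fixes Z :: "'a::real_normed_vector set"
  assumes "subspace Z" and "closed Z" and "x0 \<notin> Z"
  obtains \<phi> :: "'a \<Rightarrow> real" where "bounded_linear \<phi>" "\<And>z. z \<in> Z \<Longrightarrow> \<phi> z = 0" "\<phi> x0 = 1"
proof -
  let ?g = "{(z + t *\<^sub>R x0, t) | z t. z \<in> Z}"
  have "1 / infdist x0 Z \<ge> 0" by (simp add: infdist_nonneg)
  with dominated_graph_quotient_coordinate[OF assms]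
  obtain \<phi> where "bounded_linear \<phi>" and \<phi>: "\<And>x a. (x, a) \<in> ?g \<Longrightarrow> \<phi> x = a"
    by (rule dominated_graph_extends_to_functional) blast
  moreover have "\<phi> z = 0" if "z \<in> Z" for z
  proof -
    have "(z + 0 *\<^sub>R x0, 0) \<in> ?g" using that by blast
    then show ?thesis using \<phi> by fastforce
  qed
  moreover have "\<phi> x0 = 1"
  proof -
    have "(0 + 1 *\<^sub>R x0, 1) \<in> ?g" using subspace_0[OF assms(1)] by blast
    then show ?thesis using \<phi> by fastforce
  qed
  ultimately show ?thesis using that by blast
qed

lemma complex_structure_linear: "complex_structure CJ \<Longrightarrow> linear CJ"
  unfolding complex_structure_def by blast

lemma complex_structure_twice: "complex_structure CJ \<Longrightarrow> CJ (CJ x) = - x"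
  unfolding complex_structure_def by blast

lemma norm_complex_structure: "complex_structure CJ \<Longrightarrow> norm (CJ x) = norm x"
  unfolding complex_structure_def by (metis add_0 cos_pi_half scaleR_one scaleR_zero_left sin_pi_half)

lemma bounded_linear_complex_structure:
  assumes "complex_structure CJ" shows "bounded_linear CJ"
  using complex_structure_linear[OF assms] norm_complex_structure[OF assms]
  by (intro bounded_linear_intro[where K = 1]) (simp_all add: linear_add linear_scale)

lemma subspace_set_plus:
  assumes "subspace S" "subspace T" shows "subspace (S + T)"
proof -
  have "S + T = {x + y | x y. x \<in> S \<and> y \<in> T}" by (auto simp: set_plus_def)
  then show ?thesis using subspace_sums[OF assms] by simp
qed

lemma closed_csubspaceD:
  assumes "closed_csubspace CJ Y" shows "subspace Y" "closed Y" "CJ ` Y \<subseteq> Y"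
  using assms unfolding closed_csubspace_def by blast+

text \<open>f is the complexification \<phi> x - i \<phi> (CJ x) of a real separating functional \<phi>, normalised
  at x0; it vanishes on Y because Y is CJ-invariant.\<close>
lemma cdual_separating:
  assumes cs: "complex_structure CJ" and Y: "closed_csubspace CJ Y" and "x0 \<notin> Y"
  obtains f where "f \<in> cdual CJ" "\<And>y. y \<in> Y \<Longrightarrow> f y = 0" "f x0 = 1"
proof -
  obtain \<phi> :: "'a \<Rightarrow> real" where \<phi>: "bounded_linear \<phi>" "\<And>y. y \<in> Y \<Longrightarrow> \<phi> y = 0" "\<phi> x0 = 1"
    using separating_functional closed_csubspaceD[OF Y] \<open>x0 \<notin> Y\<close> by metis
  define l where "l = 1 - \<i> * complex_of_real (\<phi> (CJ x0))"
  have "l \<noteq> 0" using arg_cong[of _ _ Re] by (force simp: l_def)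
  define f where "f x = (complex_of_real (\<phi> x) - \<i> * complex_of_real (\<phi> (CJ x))) / l" for x
  have re: "bounded_linear (\<lambda>x. complex_of_real (\<phi> x))"
    using bounded_linear_compose[OF bounded_linear_of_real \<phi>(1)] by (simp add: o_def)
  have im: "bounded_linear (\<lambda>x. \<i> * complex_of_real (\<phi> (CJ x)))"
    by (rule bounded_linear_compose[OF bounded_linear_mult_right
          bounded_linear_compose[OF re bounded_linear_complex_structure[OF cs]]])
  have "bounded_linear f"
    unfolding f_def by (rule bounded_linear_compose[OF bounded_linear_divide bounded_linear_sub[OF re im]])
  moreover have "f (CJ x) = \<i> * f x" for x
  proof -
    have "\<phi> (CJ (CJ x)) = - \<phi> x"
      using complex_structure_twice[OF cs] \<phi>(1) by (simp add: bounded_linear.linear linear_neg)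
    then show ?thesis unfolding f_def by (simp add: algebra_simps add_divide_distrib diff_divide_distrib)
  qed
  ultimately have "f \<in> cdual CJ" unfolding cdual_def by blast
  moreover have "f y = 0" if "y \<in> Y" for y
    using \<phi>(2) that closed_csubspaceD(3)[OF Y] by (auto simp: f_def)
  moreover have "f x0 = 1" using \<phi>(3) \<open>l \<noteq> 0\<close> by (simp add: f_def l_def)
  ultimately show ?thesis using that by blast
qed

lemma closed_subspace_plus_line:
  fixes Z :: "'a::real_normed_vector set"
  assumes "subspace Z" "closed Z"
  shows "closed (Z + span {b})"
proof (cases "b \<in> Z")
  case True
  have "Z + span {b} \<subseteq> Z"
    using True span_minimal[of "{b}" Z] subspace_add[OF assms(1)] assms(1) by (auto simp: set_plus_def)
  moreover have "Z \<subseteq> Z + span {b}"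
    using set_plus_intro[of _ Z 0 "span {b}"] by (auto simp: span_0)
  ultimately have "Z + span {b} = Z" by blast
  then show ?thesis using assms(2) by simp
next
  case False
  then obtain \<phi> :: "'a \<Rightarrow> real" where \<phi>: "bounded_linear \<phi>" "\<And>z. z \<in> Z \<Longrightarrow> \<phi> z = 0" "\<phi> b = 1"
    using separating_functional assms by metis
  \<comment> \<open>x \<mapsto> x - \<phi> x b is a continuous projection onto Z with kernel span {b}\<close>
  have "Z + span {b} = (\<lambda>x. x - \<phi> x *\<^sub>R b) -` Z"
  proof (intro set_eqI iffI)
    fix x assume "x \<in> Z + span {b}"
    then obtain z t where "z \<in> Z" "x = z + t *\<^sub>R b"
      by (auto simp: set_plus_def span_singleton)
    moreover from this have "\<phi> x = t" using \<phi> by (simp add: bounded_linear.linear linear_add linear_scale)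
    ultimately show "x \<in> (\<lambda>x. x - \<phi> x *\<^sub>R b) -` Z" by simp
  next
    fix x assume "x \<in> (\<lambda>x. x - \<phi> x *\<^sub>R b) -` Z"
    then show "x \<in> Z + span {b}"
      using set_plus_intro[of "x - \<phi> x *\<^sub>R b" Z "\<phi> x *\<^sub>R b" "span {b}"] by (simp add: span_base span_scale)
  qed
  moreover have "continuous_on UNIV (\<lambda>x. x - \<phi> x *\<^sub>R b)"
    using \<phi>(1) by (intro linear_continuous_on bounded_linear_sub bounded_linear_ident bounded_linear_scaleR_left
        bounded_linear_compose[of "\<lambda>t. t *\<^sub>R b"]) auto
  ultimately show ?thesis using assms(2) continuous_closed_vimage by (metis closed_vimage)
qed

lemma closed_subspace_plus_span:
  fixes Y :: "'a::real_normed_vector set"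
  assumes "subspace Y" "closed Y" "finite B"
  shows "closed (Y + span B)"
  using assms(3)
proof (induction B rule: finite_induct)
  case empty
  then show ?case using assms(2) by simp
next
  case (insert b B)
  have "Y + span (insert b B) = (Y + span B) + span {b}"
    by (simp add: span_Un[of "{b}" B, simplified] set_plus_def add.commute add.assoc) (auto; metis add.assoc add.commute)
  then show ?case
    using closed_subspace_plus_line[OF subspace_set_plus[OF assms(1) subspace_span] insert.IH] by simp
qed

lemma dim_psubset_span_finite:
  fixes W :: "'a::real_vector set"
  assumes "subspace W" "W \<subset> span S" "finite S"
  shows "dim W < dim (span S)"
proof -
  obtain C where C: "C \<subseteq> W" "independent C" "W \<subseteq> span C" "card C = dim W" by (rule basis_exists)
  obtain D where D: "D \<subseteq> span S" "independent D" "span S \<subseteq> span D" "card D = dim (span S)"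
    by (rule basis_exists)
  have "finite D" using independent_span_bound[OF assms(3) D(2) D(1)] by simp
  obtain x where x: "x \<in> span S" "x \<notin> W" using assms(2) by blast
  have "span C \<subseteq> W" using span_minimal[OF C(1) assms(1)] .
  then have "x \<notin> span C" using x(2) by blast
  then have "independent (insert x C)" by (rule independent_insertI[OF _ C(2)])
  moreover have "insert x C \<subseteq> span D" using x(1) C(1) assms(2) D(3) by auto
  ultimately have "finite (insert x C) \<and> card (insert x C) \<le> card D"
    by (rule independent_span_bound[OF \<open>finite D\<close>])
  moreover have "x \<notin> C" using \<open>x \<notin> span C\<close> span_base by blast
  ultimately show ?thesis using C(4) D(4) by (metis Suc_le_lessD card_insert_disjoint finite_insert)
qed

definition cspan :: "('a::real_vector \<Rightarrow> 'a) \<Rightarrow> 'a set \<Rightarrow> 'a set" where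
  "cspan CJ S = span (S \<union> CJ ` S)"

lemma cspan_superset: "S \<subseteq> cspan CJ S"
  unfolding cspan_def using span_superset by blast

lemma cspan_mono: "S \<subseteq> T \<Longrightarrow> cspan CJ S \<subseteq> cspan CJ T"
  unfolding cspan_def by (intro span_mono) blast

lemma subspace_cspan: "subspace (cspan CJ S)"
  unfolding cspan_def by (rule subspace_span)

lemma cspan_0: "0 \<in> cspan CJ S"
  unfolding cspan_def by (rule span_0)

lemma cspan_subset_invariant:
  assumes "subspace V" "CJ ` V \<subseteq> V" "X \<subseteq> V"
  shows "cspan CJ X \<subseteq> V"
  unfolding cspan_def using assms by (intro span_minimal) auto

lemma cspan_invariant:
  assumes cs: "complex_structure CJ" shows "CJ ` cspan CJ S \<subseteq> cspan CJ S"
proof -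
  have "CJ ` (S \<union> CJ ` S) \<subseteq> span (S \<union> CJ ` S)"
    using complex_structure_twice[OF cs] by (force intro: span_base span_neg[of _ "S \<union> CJ ` S"])
  then have "span (CJ ` (S \<union> CJ ` S)) \<subseteq> span (S \<union> CJ ` S)"
    by (simp add: span_minimal)
  then show ?thesis
    unfolding cspan_def linear_span_image[OF complex_structure_linear[OF cs]] .
qed

lemma cspan_eq_invariant_subspace:
  assumes "subspace W" "CJ ` W \<subseteq> W" "S \<subseteq> W" "W \<subseteq> span S"
  shows "cspan CJ S = W"
proof -
  have "span (S \<union> CJ ` S) \<subseteq> W" using assms(1-3) by (intro span_minimal) auto
  moreover have "span S \<subseteq> span (S \<union> CJ ` S)" by (rule span_mono) blast
  ultimately show ?thesis using assms(4) unfolding cspan_def by blast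
qed

lemma cspan_absorb:
  assumes cs: "complex_structure CJ" and "y \<in> cspan CJ S"
  shows "cspan CJ (insert y S) = cspan CJ S"
proof -
  have "CJ y \<in> cspan CJ S" using assms cspan_invariant[OF cs] by blast
  then have "cspan CJ (insert y S) \<subseteq> cspan CJ S"
    using assms(2) unfolding cspan_def by (intro span_minimal) (auto intro: span_base)
  then show ?thesis using cspan_mono[of S "insert y S" CJ] by blast
qed

lemma closed_csubspace_plus_cspan:
  assumes cs: "complex_structure CJ" and Y: "closed_csubspace CJ Y" and "finite B"
  shows "closed_csubspace CJ (Y + cspan CJ B)"
  unfolding closed_csubspace_def
proof (intro conjI)
  show "subspace (Y + cspan CJ B)"
    using closed_csubspaceD(1)[OF Y] by (simp add: subspace_set_plus cspan_def)
  show "closed (Y + cspan CJ B)"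
    unfolding cspan_def using closed_csubspaceD[OF Y] \<open>finite B\<close> by (intro closed_subspace_plus_span) auto
  show "CJ ` (Y + cspan CJ B) \<subseteq> Y + cspan CJ B"
  proof
    fix x assume "x \<in> CJ ` (Y + cspan CJ B)"
    then obtain y w where "y \<in> Y" "w \<in> cspan CJ B" "x = CJ y + CJ w"
      by (auto simp: linear_add[OF complex_structure_linear[OF cs]] elim!: set_plus_elim)
    moreover have "CJ y \<in> Y" "CJ w \<in> cspan CJ B"
      using calculation closed_csubspaceD(3)[OF Y] cspan_invariant[OF cs, of B] by blast+
    ultimately show "x \<in> Y + cspan CJ B" by blast
  qed
qed

lemma nestD:
  assumes "nest CJ N"
  shows "H \<in> N \<Longrightarrow> closed_csubspace CJ H" and "H \<in> N \<Longrightarrow> K \<in> N \<Longrightarrow> H \<subseteq> K \<or> K \<subseteq> H"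
    and "{0} \<in> N" and "S \<subseteq> N \<Longrightarrow> closure (span (\<Union>S)) \<in> N"
  using assms unfolding nest_def by blast+

lemma nest_subset_chain: "nest CJ N \<Longrightarrow> S \<subseteq> N \<Longrightarrow> subset.chain N S"
  unfolding subset_chain_def using nestD(2) by blast

lemma subspace_Union_nest:
  assumes nest: "nest CJ N" and "S \<subseteq> N" "S \<noteq> {}"
  shows "subspace (\<Union>S)"
  unfolding subspace_def
proof (intro conjI ballI allI)
  have sub: "subspace H" if "H \<in> S" for H
    using closed_csubspaceD(1)[OF nestD(1)[OF nest]] that assms(2) by blast
  show "0 \<in> \<Union>S" using assms(3) sub subspace_0 by blast
  show "c *\<^sub>R x \<in> \<Union>S" if "x \<in> \<Union>S" for c x
    using that sub subspace_scale by blast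
  fix x y assume "x \<in> \<Union>S" "y \<in> \<Union>S"
  then obtain H where "H \<in> S" "x \<in> H" "y \<in> H"
    using nest_subset_chain[OF nest assms(2)] unfolding subset_chain_def by blast
  then show "x + y \<in> \<Union>S" using sub subspace_add by blast
qed

definition nest_alg_fr :: "('a::real_normed_vector \<Rightarrow> 'a) \<Rightarrow> 'a set set \<Rightarrow> ('a \<Rightarrow> 'a) set" where
  "nest_alg_fr CJ N = {A \<in> nest_alg CJ N. finite_rank A}"

lemma nest_alg_frD:
  assumes "A \<in> nest_alg_fr CJ N"
  shows "bounded_linear A" "A (CJ x) = CJ (A x)" "H \<in> N \<Longrightarrow> A ` H \<subseteq> H" "finite_rank A"
  using assms unfolding nest_alg_fr_def nest_alg_def bops_def by blast+

lemma nest_alg_fr_zero: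
  assumes cs: "complex_structure CJ" and nest: "nest CJ N"
  shows "(\<lambda>x. 0) \<in> nest_alg_fr CJ N"
  using complex_structure_linear[OF cs] closed_csubspaceD(1)[OF nestD(1)[OF nest]]
  by (auto simp: nest_alg_fr_def nest_alg_def bops_def finite_rank_def linear_0 subspace_0)

lemma finite_rank_add:
  assumes "finite_rank A" "finite_rank B" shows "finite_rank (\<lambda>x. A x + B x)"
proof -
  obtain F G where "finite F" "range A \<subseteq> span F" "finite G" "range B \<subseteq> span G"
    using assms unfolding finite_rank_def by blast
  moreover have "span F \<subseteq> span (F \<union> G)" "span G \<subseteq> span (F \<union> G)" by (simp_all add: span_mono)
  ultimately have "finite (F \<union> G)" "range (\<lambda>x. A x + B x) \<subseteq> span (F \<union> G)"
    by (auto intro!: span_add)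
  then show ?thesis unfolding finite_rank_def by blast
qed

lemma finite_rank_comp: "finite_rank A \<Longrightarrow> linear T \<Longrightarrow> finite_rank (T \<circ> A)"
  unfolding finite_rank_def image_comp[symmetric]
  by (metis finite_imageI image_mono linear_span_image)

lemma nest_alg_fr_add:
  assumes cs: "complex_structure CJ" and nest: "nest CJ N"
    and A: "A \<in> nest_alg_fr CJ N" and B: "B \<in> nest_alg_fr CJ N"
  shows "(\<lambda>x. A x + B x) \<in> nest_alg_fr CJ N"
proof -
  have "(\<lambda>x. A x + B x) ` H \<subseteq> H" if "H \<in> N" for H
    using nest_alg_frD(3)[OF A that] nest_alg_frD(3)[OF B that]
      closed_csubspaceD(1)[OF nestD(1)[OF nest that]] by (auto intro: subspace_add)
  moreover have "bounded_linear (\<lambda>x. A x + B x)"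
    using nest_alg_frD(1)[OF A] nest_alg_frD(1)[OF B] by (rule bounded_linear_add)
  moreover have "A (CJ x) + B (CJ x) = CJ (A x + B x)" for x
    using nest_alg_frD(2)[OF A] nest_alg_frD(2)[OF B] linear_add[OF complex_structure_linear[OF cs]] by simp
  ultimately show ?thesis
    using finite_rank_add[OF nest_alg_frD(4)[OF A] nest_alg_frD(4)[OF B]]
    unfolding nest_alg_fr_def nest_alg_def bops_def by blast
qed

definition rank_one :: "('a::real_vector \<Rightarrow> 'a) \<Rightarrow> ('a \<Rightarrow> complex) \<Rightarrow> 'a \<Rightarrow> 'a \<Rightarrow> 'a" where
  "rank_one CJ f u x = cscale CJ (f x) u"

lemma rank_one_mem_nest_alg_fr:
  assumes cs: "complex_structure CJ" and nest: "nest CJ N" and f: "f \<in> cdual CJ"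
    and split: "\<And>H. H \<in> N \<Longrightarrow> u \<in> H \<or> (\<forall>x\<in>H. f x = 0)"
  shows "rank_one CJ f u \<in> nest_alg_fr CJ N"
proof -
  have bf: "bounded_linear f" and fCJ: "\<And>x. f (CJ x) = \<i> * f x"
    using f unfolding cdual_def by blast+
  have "bounded_linear (rank_one CJ f u)"
    unfolding rank_one_def cscale_def
    by (intro bounded_linear_add bounded_linear_compose[OF bounded_linear_scaleR_left]
        bounded_linear_compose[OF bounded_linear_Re bf] bounded_linear_compose[OF bounded_linear_Im bf])
  moreover have "rank_one CJ f u (CJ x) = CJ (rank_one CJ f u x)" for x
    using complex_structure_linear[OF cs] complex_structure_twice[OF cs, of u]
    by (simp add: rank_one_def cscale_def fCJ linear_add linear_scale)
  moreover have "rank_one CJ f u ` H \<subseteq> H" if "H \<in> N" for H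
    using split[OF that] closed_csubspaceD[OF nestD(1)[OF nest that]]
    by (auto simp: rank_one_def cscale_def intro: subspace_add subspace_scale subspace_0)
  moreover have "finite_rank (rank_one CJ f u)"
    unfolding finite_rank_def rank_one_def cscale_def
    by (intro exI[of _ "{u, CJ u}"]) (auto intro: span_add span_scale span_base)
  ultimately show ?thesis unfolding nest_alg_fr_def nest_alg_def bops_def by blast
qed

definition fr_approximable :: "('a::real_normed_vector \<Rightarrow> 'a) \<Rightarrow> 'a set set \<Rightarrow> 'a set \<Rightarrow> bool" where
  "fr_approximable CJ N X \<longleftrightarrow> (\<forall>F \<delta>. finite F \<and> F \<subseteq> X \<and> \<delta> > 0 \<longrightarrow>
     (\<exists>A\<in>nest_alg_fr CJ N. \<forall>x\<in>F. norm (A x - x) < \<delta>))"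

lemma fr_approximableD:
  assumes "fr_approximable CJ N X" "finite F" "F \<subseteq> X" "\<delta> > 0"
  obtains A where "A \<in> nest_alg_fr CJ N" "\<And>x. x \<in> F \<Longrightarrow> norm (A x - x) < \<delta>"
  using assms unfolding fr_approximable_def by meson

lemma fr_approximable_mono: "X \<subseteq> Y \<Longrightarrow> fr_approximable CJ N Y \<Longrightarrow> fr_approximable CJ N X"
  unfolding fr_approximable_def by blast

lemma norm_linear_sum_deviation:
  assumes "linear A"
  shows "norm (A (\<Sum>v\<in>T. u v *\<^sub>R v) - (\<Sum>v\<in>T. u v *\<^sub>R v)) \<le> (\<Sum>v\<in>T. \<bar>u v\<bar> * norm (A v - v))"
proof -
  have "A (\<Sum>v\<in>T. u v *\<^sub>R v) - (\<Sum>v\<in>T. u v *\<^sub>R v) = (\<Sum>v\<in>T. u v *\<^sub>R (A v - v))"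
    by (simp add: linear_sum[OF assms] linear_scale[OF assms] scaleR_diff_right sum_subtractf)
  also have "norm \<dots> \<le> (\<Sum>v\<in>T. norm (u v *\<^sub>R (A v - v)))" by (rule norm_sum)
  finally show ?thesis by simp
qed

lemma fr_approximable_span:
  assumes "fr_approximable CJ N S" shows "fr_approximable CJ N (span S)"
  unfolding fr_approximable_def
proof (intro allI impI, elim conjE)
  fix F and \<delta> :: real assume "finite F" "F \<subseteq> span S" "\<delta> > 0"
  have "\<forall>x\<in>F. \<exists>T u. finite T \<and> T \<subseteq> S \<and> (\<Sum>v\<in>T. u v *\<^sub>R v) = x"
    using \<open>F \<subseteq> span S\<close> unfolding span_explicit by blast
  then obtain T u where T: "\<And>x. x \<in> F \<Longrightarrow> finite (T x) \<and> T x \<subseteq> S \<and> (\<Sum>v\<in>T x. u x v *\<^sub>R v) = x"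
    by metis
  define K where "K = (\<Sum>x\<in>F. \<Sum>v\<in>T x. \<bar>u x v\<bar>)"
  have "K \<ge> 0" by (simp add: K_def sum_nonneg)
  have "finite (\<Union>x\<in>F. T x)" "(\<Union>x\<in>F. T x) \<subseteq> S" using T \<open>finite F\<close> by auto
  moreover have "\<delta> / (K + 1) > 0" using \<open>\<delta> > 0\<close> \<open>K \<ge> 0\<close> by simp
  ultimately obtain A where A: "A \<in> nest_alg_fr CJ N"
    and close: "\<And>v. v \<in> (\<Union>x\<in>F. T x) \<Longrightarrow> norm (A v - v) < \<delta> / (K + 1)"
    by (rule fr_approximableD[OF assms]) blast
  have "norm (A x - x) < \<delta>" if "x \<in> F" for x
  proof -
    have "linear A" using nest_alg_frD(1)[OF A] bounded_linear.linear by blast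
    then have "norm (A x - x) \<le> (\<Sum>v\<in>T x. \<bar>u x v\<bar> * norm (A v - v))"
      using norm_linear_sum_deviation[of A "u x" "T x"] T[OF that] by simp
    also have "\<dots> \<le> (\<Sum>v\<in>T x. \<bar>u x v\<bar> * (\<delta> / (K + 1)))"
      using close that by (intro sum_mono mult_left_mono) (auto intro: less_imp_le)
    also have "\<dots> = (\<Sum>v\<in>T x. \<bar>u x v\<bar>) * (\<delta> / (K + 1))" by (simp only: sum_distrib_right)
    also have "\<dots> \<le> K * (\<delta> / (K + 1))"
    proof (rule mult_right_mono)
      show "(\<Sum>v\<in>T x. \<bar>u x v\<bar>) \<le> K"
        unfolding K_def using that \<open>finite F\<close> by (intro member_le_sum) (simp_all add: sum_nonneg)
    qed (use \<open>\<delta> > 0\<close> \<open>K \<ge> 0\<close> in simp)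
    also have "\<dots> < \<delta>" using \<open>\<delta> > 0\<close> \<open>K \<ge> 0\<close> by (simp add: field_simps)
    finally show ?thesis .
  qed
  then show "\<exists>A\<in>nest_alg_fr CJ N. \<forall>x\<in>F. norm (A x - x) < \<delta>" using A by blast
qed

lemma fr_approximable_Un_image:
  assumes cs: "complex_structure CJ" and approx: "fr_approximable CJ N S"
  shows "fr_approximable CJ N (S \<union> CJ ` S)"
  unfolding fr_approximable_def
proof (intro allI impI, elim conjE)
  fix F and \<delta> :: real assume "finite F" "F \<subseteq> S \<union> CJ ` S" "\<delta> > 0"
  define F' where "F' = S \<inter> (F \<union> (\<lambda>x. - CJ x) ` F)"
  obtain A where A: "A \<in> nest_alg_fr CJ N" and close: "\<And>x. x \<in> F' \<Longrightarrow> norm (A x - x) < \<delta>"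
    using fr_approximableD[OF approx _ _ \<open>\<delta> > 0\<close>, of F'] \<open>finite F\<close> by (auto simp: F'_def)
  have "norm (A x - x) < \<delta>" if x: "x \<in> F" for x
  proof (cases "x \<in> S")
    case True
    then show ?thesis using close x by (simp add: F'_def)
  next
    case False
    then obtain s where "s \<in> S" "x = CJ s" using \<open>F \<subseteq> S \<union> CJ ` S\<close> x by blast
    moreover from this have "s \<in> F'"
      using x complex_structure_twice[OF cs, of s] by (force simp: F'_def)
    moreover have "A (CJ s) - CJ s = CJ (A s - s)"
      using nest_alg_frD(2)[OF A] linear_diff[OF complex_structure_linear[OF cs]] by simp
    ultimately show ?thesis using close norm_complex_structure[OF cs] by simp
  qed
  then show "\<exists>A\<in>nest_alg_fr CJ N. \<forall>x\<in>F. norm (A x - x) < \<delta>" using A by blast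
qed

lemma fr_approximable_cspan:
  "complex_structure CJ \<Longrightarrow> fr_approximable CJ N S \<Longrightarrow> fr_approximable CJ N (cspan CJ S)"
  unfolding cspan_def by (intro fr_approximable_span fr_approximable_Un_image)

lemma nest_alg_fr_correction:
  assumes cs: "complex_structure CJ" and nest: "nest CJ N" and A': "A' \<in> nest_alg_fr CJ N"
    and Q: "closed_csubspace CJ Q" "y \<notin> Q" and split: "\<And>H. H \<in> N \<Longrightarrow> u \<in> H \<or> H \<subseteq> Q"
  obtains A where "A \<in> nest_alg_fr CJ N" "\<And>x. x \<in> Q \<Longrightarrow> A x = A' x" "A y = A' y + u"
proof -
  obtain f where f: "f \<in> cdual CJ" "\<And>x. x \<in> Q \<Longrightarrow> f x = 0" "f y = 1"
    using cdual_separating[OF cs Q] by blast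
  have "rank_one CJ f u \<in> nest_alg_fr CJ N"
    using rank_one_mem_nest_alg_fr[OF cs nest f(1)] split f(2) by blast
  then have "(\<lambda>x. A' x + rank_one CJ f u x) \<in> nest_alg_fr CJ N"
    by (rule nest_alg_fr_add[OF cs nest A'])
  moreover have "A' x + rank_one CJ f u x = A' x" if "x \<in> Q" for x
    using f(2)[OF that] by (simp add: rank_one_def cscale_def)
  moreover have "A' y + rank_one CJ f u y = A' y + u"
    using f(3) by (simp add: rank_one_def cscale_def)
  ultimately show ?thesis using that by blast
qed

text \<open>The closure of nest_below N y is the join of the nest elements not containing y; it may
  contain y.\<close>
definition nest_below :: "'a set set \<Rightarrow> 'a \<Rightarrow> 'a set" where
  "nest_below N y = \<Union>{H \<in> N. y \<notin> H}"

lemma nest_below: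
  assumes nest: "nest CJ N" and "y \<noteq> 0"
  shows "subspace (nest_below N y)" and "closure (nest_below N y) \<in> N"
proof -
  have sub: "{H \<in> N. y \<notin> H} \<subseteq> N" and ne: "{0} \<in> {H \<in> N. y \<notin> H}"
    using nestD(3)[OF nest] \<open>y \<noteq> 0\<close> by auto
  show "subspace (nest_below N y)"
    unfolding nest_below_def using subspace_Union_nest[OF nest sub] ne by blast
  then have "span (nest_below N y) = nest_below N y" by (simp add: span_eq_iff)
  then show "closure (nest_below N y) \<in> N"
    using nestD(4)[OF nest sub] unfolding nest_below_def by metis
qed

lemma fr_approximable_step_gap:
  assumes cs: "complex_structure CJ" and nest: "nest CJ N" and "finite C"
    and approx: "fr_approximable CJ N (cspan CJ C)" and "y \<notin> cspan CJ C"
    and gap: "y \<notin> closure (nest_below N y) + cspan CJ C"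
    and "finite F" "F \<subseteq> cspan CJ C" "\<delta> > 0"
  obtains A where "A \<in> nest_alg_fr CJ N" "\<And>x. x \<in> F \<Longrightarrow> norm (A x - x) < \<delta>" "A y = y"
proof -
  let ?G = "closure (nest_below N y)" and ?Q = "closure (nest_below N y) + cspan CJ C"
  have "y \<noteq> 0" using \<open>y \<notin> cspan CJ C\<close> cspan_0 by metis
  have "closed_csubspace CJ ?Q"
    using closed_csubspace_plus_cspan[OF cs nestD(1)[OF nest nest_below(2)[OF nest \<open>y \<noteq> 0\<close>]] \<open>finite C\<close>] .
  obtain A' where A': "A' \<in> nest_alg_fr CJ N" and close: "\<And>x. x \<in> F \<Longrightarrow> norm (A' x - x) < \<delta>"
    using fr_approximableD[OF approx \<open>finite F\<close> \<open>F \<subseteq> cspan CJ C\<close> \<open>\<delta> > 0\<close>] by blast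
  \<comment> \<open>the nest elements containing y also contain y - A' y; the others lie in ?G\<close>
  have "y - A' y \<in> H \<or> H \<subseteq> ?Q" if "H \<in> N" for H
  proof (cases "y \<in> H")
    case True
    then show ?thesis
      using nest_alg_frD(3)[OF A' that] closed_csubspaceD(1)[OF nestD(1)[OF nest that]]
      by (simp add: image_subset_iff subspace_diff)
  next
    case False
    then have "H \<subseteq> nest_below N y" using that unfolding nest_below_def by blast
    then have "H \<subseteq> ?G" using closure_subset by blast
    moreover have "?G \<subseteq> ?Q" using set_zero_plus2[OF cspan_0] by (metis add.commute)
    ultimately show ?thesis by blast
  qed
  then obtain A where A: "A \<in> nest_alg_fr CJ N" "\<And>x. x \<in> ?Q \<Longrightarrow> A x = A' x" "A y = A' y + (y - A' y)"
    using nest_alg_fr_correction[OF cs nest A' \<open>closed_csubspace CJ ?Q\<close> gap] by blast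
  have "0 \<in> ?G" using subspace_0[OF nest_below(1)[OF nest \<open>y \<noteq> 0\<close>]] closure_subset by blast
  then have "F \<subseteq> ?Q" using set_zero_plus2 \<open>F \<subseteq> cspan CJ C\<close> by blast
  then show ?thesis using that[OF A(1)] A(2,3) close by (simp add: subset_iff)
qed

lemma notin_plus_cspan:
  assumes "H0 \<in> N" "y \<notin> H0" "y \<notin> cspan CJ C"
    and top: "\<And>H. H \<in> N \<Longrightarrow> y \<in> H \<or> H \<inter> cspan CJ (insert y C) \<subseteq> cspan CJ C"
  shows "y \<notin> H0 + cspan CJ C"
proof
  assume "y \<in> H0 + cspan CJ C"
  then obtain h w where hw: "h \<in> H0" "w \<in> cspan CJ C" "y = h + w" by (auto elim: set_plus_elim)
  have "y \<in> cspan CJ (insert y C)" "w \<in> cspan CJ (insert y C)"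
    using cspan_superset hw(2) cspan_mono[of C "insert y C"] by blast+
  then have "h \<in> cspan CJ (insert y C)"
    using hw(3) span_diff[of y _ w] unfolding cspan_def by (metis add_diff_cancel_right')
  then have "h \<in> cspan CJ C" using top[OF assms(1)] assms(2) hw(1) by blast
  then have "y \<in> cspan CJ C" using hw unfolding cspan_def by (simp add: span_add)
  then show False using \<open>y \<notin> cspan CJ C\<close> by blast
qed

lemma fr_approximable_step_limit:
  assumes cs: "complex_structure CJ" and nest: "nest CJ N" and "finite C"
    and approx: "fr_approximable CJ N (cspan CJ C)" and "y \<notin> cspan CJ C"
    and top: "\<And>H. H \<in> N \<Longrightarrow> y \<in> H \<or> H \<inter> cspan CJ (insert y C) \<subseteq> cspan CJ C"
    and limit: "y \<in> closure (nest_below N y) + cspan CJ C"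
    and "finite F" "F \<subseteq> cspan CJ C" "\<delta> > 0"
  obtains A where "A \<in> nest_alg_fr CJ N" "\<And>x. x \<in> F \<Longrightarrow> norm (A x - x) < \<delta>" "norm (A y - y) < \<delta>"
proof -
  let ?G = "closure (nest_below N y)"
  have "y \<noteq> 0" using \<open>y \<notin> cspan CJ C\<close> cspan_0 by metis
  have G: "closed_csubspace CJ ?G" using nestD(1)[OF nest nest_below(2)[OF nest \<open>y \<noteq> 0\<close>]] .
  obtain g w0 where gw0: "g \<in> ?G" "w0 \<in> cspan CJ C" "y = g + w0"
    using limit by (auto elim: set_plus_elim)
  obtain A' where A': "A' \<in> nest_alg_fr CJ N" and close: "\<And>x. x \<in> insert w0 F \<Longrightarrow> norm (A' x - x) < \<delta> / 2"
    using fr_approximableD[OF approx, of "insert w0 F" "\<delta> / 2"] gw0(2) assms(8-10) by auto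
  have "g - A' g \<in> ?G"
    using nest_alg_frD(3)[OF A' nest_below(2)[OF nest \<open>y \<noteq> 0\<close>]] gw0(1) closed_csubspaceD(1)[OF G]
    by (simp add: image_subset_iff subspace_diff)
  then obtain z where z: "z \<in> nest_below N y" "dist z (g - A' g) < \<delta> / 2"
    using closure_approachable \<open>\<delta> > 0\<close> by (metis half_gt_zero)
  then obtain H0 where H0: "H0 \<in> N" "y \<notin> H0" "z \<in> H0" unfolding nest_below_def by blast
  let ?Q = "H0 + cspan CJ C"
  have Q: "closed_csubspace CJ ?Q"
    using closed_csubspace_plus_cspan[OF cs nestD(1)[OF nest H0(1)] \<open>finite C\<close>] .
  have "y \<notin> ?Q" using notin_plus_cspan[OF H0(1,2) \<open>y \<notin> cspan CJ C\<close> top] .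
  have "0 \<in> H0" using subspace_0[OF closed_csubspaceD(1)[OF nestD(1)[OF nest H0(1)]]] .
  have H0Q: "H0 \<subseteq> ?Q" using set_zero_plus2[OF cspan_0] by (metis add.commute)
  \<comment> \<open>the nest is totally ordered: every element lies in H0 or contains H0, hence z\<close>
  have "z \<in> H \<or> H \<subseteq> ?Q" if "H \<in> N" for H
    using nestD(2)[OF nest that H0(1)] H0(3) H0Q by blast
  then obtain A where A: "A \<in> nest_alg_fr CJ N" "\<And>x. x \<in> ?Q \<Longrightarrow> A x = A' x" "A y = A' y + z"
    using nest_alg_fr_correction[OF cs nest A' Q \<open>y \<notin> ?Q\<close>] by blast
  have "F \<subseteq> ?Q" using set_zero_plus2[OF \<open>0 \<in> H0\<close>] \<open>F \<subseteq> cspan CJ C\<close> by blast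
  then have "norm (A x - x) < \<delta>" if "x \<in> F" for x
    using A(2) close that \<open>\<delta> > 0\<close> by fastforce
  moreover have "norm (A y - y) < \<delta>"
  proof -
    have "A y - y = (z - (g - A' g)) + (A' w0 - w0)"
      using A(3) gw0(3) linear_add[OF bounded_linear.linear[OF nest_alg_frD(1)[OF A']]]
      by (simp add: algebra_simps)
    then have "norm (A y - y) \<le> norm (z - (g - A' g)) + norm (A' w0 - w0)"
      by (metis norm_triangle_ineq)
    also have "\<dots> < \<delta> / 2 + \<delta> / 2"
      using z(2) close[of w0] by (intro add_strict_mono) (simp_all add: dist_norm)
    finally show ?thesis by simp
  qed
  ultimately show ?thesis using that A(1) by blast
qed

lemma fr_approximable_cspan_insert:
  assumes cs: "complex_structure CJ" and nest: "nest CJ N" and "finite C"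
    and approx: "fr_approximable CJ N (cspan CJ C)"
    and top: "\<And>H. H \<in> N \<Longrightarrow> y \<in> H \<or> H \<inter> cspan CJ (insert y C) \<subseteq> cspan CJ C"
  shows "fr_approximable CJ N (cspan CJ (insert y C))"
proof (cases "y \<in> cspan CJ C")
  case True
  then show ?thesis using approx cspan_absorb[OF cs] by simp
next
  case False
  have "fr_approximable CJ N (insert y (cspan CJ C))"
    unfolding fr_approximable_def
  proof (intro allI impI, elim conjE)
    fix F and \<delta> :: real assume "finite F" "F \<subseteq> insert y (cspan CJ C)" "\<delta> > 0"
    then have F': "finite (F - {y})" "F - {y} \<subseteq> cspan CJ C" by auto
    obtain A where A: "A \<in> nest_alg_fr CJ N" "\<And>x. x \<in> F - {y} \<Longrightarrow> norm (A x - x) < \<delta>"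
      "norm (A y - y) < \<delta>"
    proof (cases "y \<in> closure (nest_below N y) + cspan CJ C")
      case True
      then show ?thesis
        using fr_approximable_step_limit[OF cs nest \<open>finite C\<close> approx False top _ F' \<open>\<delta> > 0\<close>] that
        by blast
    next
      case False
      then show ?thesis
        using fr_approximable_step_gap[OF cs nest \<open>finite C\<close> approx \<open>y \<notin> cspan CJ C\<close> _ F' \<open>\<delta> > 0\<close>]
          that \<open>\<delta> > 0\<close> by (metis diff_self norm_zero)
    qed
    then show "\<exists>A\<in>nest_alg_fr CJ N. \<forall>x\<in>F. norm (A x - x) < \<delta>"
      by (metis DiffI singletonD)
  qed
  then have "fr_approximable CJ N (cspan CJ (insert y (cspan CJ C)))"
    by (rule fr_approximable_cspan[OF cs])
  moreover have "cspan CJ (insert y C) \<subseteq> cspan CJ (insert y (cspan CJ C))"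
    by (intro cspan_mono insert_mono cspan_superset)
  ultimately show ?thesis by (rule fr_approximable_mono[rotated])
qed

lemma fr_approximable_cspan_extend:
  assumes cs: "complex_structure CJ" and nest: "nest CJ N" and "finite C"
    and approx: "fr_approximable CJ N (cspan CJ C)"
    and V: "subspace V" "CJ ` V \<subseteq> V" "C \<subseteq> V"
    and below: "\<And>H. H \<in> N \<Longrightarrow> V \<subseteq> H \<or> H \<inter> V \<subseteq> cspan CJ C"
    and "finite D" "D \<subseteq> V"
  shows "fr_approximable CJ N (cspan CJ (C \<union> D))"
  using \<open>finite D\<close> \<open>D \<subseteq> V\<close>
proof (induction D rule: finite_induct)
  case empty
  then show ?case using approx by simp
next
  case (insert y D)
  have sub: "cspan CJ (insert y (C \<union> D)) \<subseteq> V"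
    using insert.prems V by (intro cspan_subset_invariant) auto
  have "y \<in> H \<or> H \<inter> cspan CJ (insert y (C \<union> D)) \<subseteq> cspan CJ (C \<union> D)" if "H \<in> N" for H
  proof (cases "y \<in> H")
    case False
    then have "H \<inter> V \<subseteq> cspan CJ C" using below[OF that] insert.prems by blast
    then show ?thesis using sub cspan_mono[of C "C \<union> D" CJ] by blast
  qed simp
  then have "fr_approximable CJ N (cspan CJ (insert y (C \<union> D)))"
    using fr_approximable_cspan_insert[OF cs nest _ insert.IH] insert.hyps(1) insert.prems \<open>finite C\<close>
    by blast
  then show ?case by simp
qed

text \<open>The part of V = cspan B lying in the nest elements that do not contain V is a
  proper subspace of V, because the finitely many generators of V would otherwise lie in a
  single such element.\<close>
lemma nest_cspan_below:
  assumes cs: "complex_structure CJ" and nest: "nest CJ N" and "finite B"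
    and nonzero: "\<not> cspan CJ B \<subseteq> {0}"
  obtains C where "finite C" "cspan CJ C \<subset> cspan CJ B"
    "\<And>H. H \<in> N \<Longrightarrow> cspan CJ B \<subseteq> H \<or> H \<inter> cspan CJ B \<subseteq> cspan CJ C"
proof -
  let ?V = "cspan CJ B"
  define K where "K = {H \<in> N. \<not> ?V \<subseteq> H}"
  define W where "W = ?V \<inter> \<Union>K"
  have K: "K \<subseteq> N" "{0} \<in> K" using nestD(3)[OF nest] nonzero by (auto simp: K_def)
  have KD: "subspace H" "CJ ` H \<subseteq> H" if "H \<in> K" for H
    using closed_csubspaceD[OF nestD(1)[OF nest]] that K(1) by blast+
  have "subspace W"
    using subspace_inter[OF subspace_cspan subspace_Union_nest[OF nest K(1)]] K(2) by (auto simp: W_def)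
  moreover have "CJ ` W \<subseteq> W"
  proof
    fix x assume "x \<in> CJ ` W"
    then obtain w H where "x = CJ w" "w \<in> ?V" "H \<in> K" "w \<in> H" unfolding W_def by blast
    then have "x \<in> ?V" "x \<in> H" using cspan_invariant[OF cs] KD(2)[of H] by blast+
    then show "x \<in> W" using \<open>H \<in> K\<close> unfolding W_def by blast
  qed
  ultimately have W: "subspace W" "CJ ` W \<subseteq> W" .
  have "\<not> ?V \<subseteq> \<Union>K"
  proof
    assume "?V \<subseteq> \<Union>K"
    moreover have "B \<union> CJ ` B \<subseteq> ?V" unfolding cspan_def by (rule span_superset)
    ultimately have gen: "B \<union> CJ ` B \<subseteq> \<Union>K" by (rule subset_trans[rotated])
    have "finite (B \<union> CJ ` B)" "K \<noteq> {}" using \<open>finite B\<close> K(2) by auto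
    then obtain H where "H \<in> K" "B \<union> CJ ` B \<subseteq> H"
      by (rule finite_subset_Union_chain[OF _ gen _ nest_subset_chain[OF nest K(1)]])
    then have "?V \<subseteq> H" unfolding cspan_def by (intro span_minimal KD(1))
    with \<open>H \<in> K\<close> show False unfolding K_def by blast
  qed
  then have "W \<subset> ?V" unfolding W_def by blast
  obtain C where C: "C \<subseteq> W" "independent C" "W \<subseteq> span C" by (rule basis_exists)
  have "C \<subseteq> span (B \<union> CJ ` B)" using C(1) unfolding W_def cspan_def by (rule subset_trans) simp
  then have "finite C"
    using independent_span_bound[OF _ C(2), of "B \<union> CJ ` B"] \<open>finite B\<close> by simp
  moreover have "cspan CJ C = W" using cspan_eq_invariant_subspace[OF W C(1,3)] .
  moreover have "cspan CJ B \<subseteq> H \<or> H \<inter> cspan CJ B \<subseteq> W" if "H \<in> N" for H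
    using that unfolding W_def K_def by blast
  ultimately show ?thesis using that \<open>W \<subset> ?V\<close> by simp
qed

lemma fr_approximable_cspan_finite:
  assumes cs: "complex_structure CJ" and nest: "nest CJ N" and "finite B"
  shows "fr_approximable CJ N (cspan CJ B)"
  using \<open>finite B\<close>
proof (induction "dim (cspan CJ B)" arbitrary: B rule: less_induct)
  case less
  show ?case
  proof (cases "cspan CJ B \<subseteq> {0}")
    case True
    then show ?thesis
      unfolding fr_approximable_def using nest_alg_fr_zero[OF cs nest]
      by (intro allI impI bexI[of _ "\<lambda>x. 0"]) auto
  next
    case False
    then obtain C where C: "finite C" "cspan CJ C \<subset> cspan CJ B"
      and below: "\<And>H. H \<in> N \<Longrightarrow> cspan CJ B \<subseteq> H \<or> H \<inter> cspan CJ B \<subseteq> cspan CJ C"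
      using nest_cspan_below[OF cs nest less.prems] by blast
    have "cspan CJ C \<subset> span (B \<union> CJ ` B)" "finite (B \<union> CJ ` B)"
      using C(2) less.prems by (simp_all add: cspan_def)
    then have "dim (cspan CJ C) < dim (span (B \<union> CJ ` B))"
      by (rule dim_psubset_span_finite[OF subspace_cspan])
    then have "dim (cspan CJ C) < dim (cspan CJ B)" by (simp only: cspan_def)
    then have "fr_approximable CJ N (cspan CJ C)" by (rule less.hyps[OF _ C(1)])
    then have "fr_approximable CJ N (cspan CJ (C \<union> B))"
      using C cspan_superset[of C CJ] cspan_superset[of B CJ]
      by (intro fr_approximable_cspan_extend[OF cs nest _ _ subspace_cspan cspan_invariant[OF cs] _ below
            less.prems]) auto
    moreover have "cspan CJ B \<subseteq> cspan CJ (C \<union> B)" by (rule cspan_mono) blast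
    ultimately show ?thesis by (rule fr_approximable_mono[rotated])
  qed
qed

lemma nest_alg_fr_approximate_identity:
  assumes cs: "complex_structure CJ" and nest: "nest CJ N" and "finite F" "\<delta> > 0"
  obtains A where "A \<in> nest_alg_fr CJ N" "\<And>x. x \<in> F \<Longrightarrow> norm (A x - x) < \<delta>"
  using fr_approximableD[OF fr_approximable_cspan_finite[OF cs nest \<open>finite F\<close>] \<open>finite F\<close>
      cspan_superset \<open>\<delta> > 0\<close>] by blast

lemma bimodule_subset_sot_closure:
  assumes cs: "complex_structure CJ" and nest: "nest CJ N" and M: "bimodule CJ N M"
  shows "M \<subseteq> sot_closure CJ {T \<in> M. finite_rank T}"
proof
  fix T assume "T \<in> M"
  then have "T \<in> bops CJ" using M unfolding bimodule_def op_csubspace_def by blast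
  then have "bounded_linear T" unfolding bops_def by blast
  then obtain K where "K > 0" and K: "\<And>x. norm (T x) \<le> norm x * K"
    using bounded_linear.pos_bounded by blast
  have "\<exists>S\<in>{T \<in> M. finite_rank T}. \<forall>x\<in>F. norm (S x - T x) < e"
    if "finite F" "e > 0" for F and e :: real
  proof -
    obtain A where A: "A \<in> nest_alg_fr CJ N" and close: "\<And>x. x \<in> F \<Longrightarrow> norm (A x - x) < e / K"
      using nest_alg_fr_approximate_identity[OF cs nest \<open>finite F\<close> divide_pos_pos[OF \<open>e > 0\<close> \<open>K > 0\<close>]]
      by blast
    have "T \<circ> A \<in> M" using M A \<open>T \<in> M\<close> unfolding bimodule_def nest_alg_fr_def by blast
    moreover have "finite_rank (T \<circ> A)"
      using finite_rank_comp[OF nest_alg_frD(4)[OF A] bounded_linear.linear[OF \<open>bounded_linear T\<close>]] .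
    moreover have "norm ((T \<circ> A) x - T x) < e" if "x \<in> F" for x
    proof -
      have "norm ((T \<circ> A) x - T x) = norm (T (A x - x))"
        using linear_diff[OF bounded_linear.linear[OF \<open>bounded_linear T\<close>]] by simp
      also have "\<dots> \<le> norm (A x - x) * K" by (rule K)
      also have "\<dots> < e" using close[OF that] \<open>K > 0\<close> by (simp add: pos_less_divide_eq)
      finally show ?thesis .
    qed
    ultimately show ?thesis by blast
  qed
  then show "T \<in> sot_closure CJ {T \<in> M. finite_rank T}"
    unfolding sot_closure_def using \<open>T \<in> bops CJ\<close> by blast
qed

lemma sot_closure_subset_wot_closure: "sot_closure CJ X \<subseteq> wot_closure CJ X"
proof
  fix T assume T: "T \<in> sot_closure CJ X"
  have "\<exists>S\<in>X. \<forall>(x, f)\<in>F. cmod (f (S x - T x)) < e"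
    if "finite F" "F \<subseteq> UNIV \<times> cdual CJ" "e > 0" for F and e :: real
  proof -
    have bl: "bounded_linear f" if "(x, f) \<in> F" for x f
      using \<open>F \<subseteq> UNIV \<times> cdual CJ\<close> that unfolding cdual_def by blast
    define K where "K = 1 + (\<Sum>q\<in>F. onorm (snd q))"
    have onorm_le: "onorm f \<le> K - 1" if "(x, f) \<in> F" for x f
      unfolding K_def using member_le_sum[OF that _ \<open>finite F\<close>, of "\<lambda>q. onorm (snd q)"]
        onorm_pos_le bl by force
    have "(\<Sum>q\<in>F. onorm (snd q)) \<ge> 0"
      by (intro sum_nonneg) (metis bl onorm_pos_le prod.collapse)
    then have "K > 0" unfolding K_def by simp
    have "finite (fst ` F)" "e / K > 0" using \<open>finite F\<close> \<open>e > 0\<close> \<open>K > 0\<close> by auto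
    then have "\<exists>S\<in>X. \<forall>x\<in>fst ` F. norm (S x - T x) < e / K"
      using T unfolding sot_closure_def by (simp only: mem_Collect_eq)
    then obtain S where "S \<in> X" and close: "\<And>x. x \<in> fst ` F \<Longrightarrow> norm (S x - T x) < e / K"
      by blast
    have "cmod (f (S x - T x)) < e" if "(x, f) \<in> F" for x f
    proof -
      have "cmod (f (S x - T x)) \<le> onorm f * norm (S x - T x)" by (rule onorm[OF bl[OF that]])
      also have "\<dots> \<le> (K - 1) * norm (S x - T x)" using onorm_le[OF that] by (simp add: mult_right_mono)
      also have "\<dots> \<le> (K - 1) * (e / K)"
      proof (rule mult_left_mono)
        have "x \<in> fst ` F" using that by force
        then show "norm (S x - T x) \<le> e / K" using close less_imp_le by blast
        show "0 \<le> K - 1" using onorm_le[OF that] onorm_pos_le[OF bl[OF that]] by linarith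
      qed
      also have "\<dots> < e" using \<open>K > 0\<close> \<open>e > 0\<close> by (simp add: field_simps)
      finally show ?thesis .
    qed
    then show ?thesis using \<open>S \<in> X\<close> by blast
  qed
  then show "T \<in> wot_closure CJ X"
    using T unfolding sot_closure_def wot_closure_def by blast
qed

theorem mainTheorem9:
  fixes CJ :: "'a::banach \<Rightarrow> 'a" and N :: "'a set set" and M :: "('a \<Rightarrow> 'a) set"
  assumes "complex_structure CJ"
    and "nest CJ N"
    and "bimodule CJ N M"
  shows "M \<subseteq> sot_closure CJ {T \<in> M. finite_rank T} \<and>
         sot_closure CJ {T \<in> M. finite_rank T} \<subseteq> wot_closure CJ {T \<in> M. finite_rank T}"
  using bimodule_subset_sot_closure[OF assms] sot_closure_subset_wot_closure by blast

end
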